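(* Let $\alpha>0$, let $f^-(x)=x$ on $[0,1]$, and let $f^+:[0,1]\to[0,1]$. If $ALG(uvw)\le\alpha\,LP(uvw)$ for every $(+,+,-)$-triangle whose edge lengths lie in $[0,1]$ and satisfy the triangle inequalities, then for every $x\in[0,1/2]$, \[ f^+(x)\ \ge\ \frac{8x-4\alpha x^2-\sqrt{(4\alpha x^2-8x)^2-4(1-\alpha+4x)(1+\alpha-2\alpha x)}}{2(1+\alpha-2\alpha x)}. \]
   Context: A triangle $uvw$ has pairs $uv,vw,uw$, each a positive ($+$) or negative ($-$) edge with length $x_e\in[0,1]$; triangle inequalities: each length is at most the sum of the other two. Let $p_e=f^+(x_e)$ for positive and $p_e=f^-(x_e)$ for negative edges. For a pair $(u,v)$ with third vertex $w$: $e.cost_w(u,v)=p_{uw}(1-p_{vw})+(1-p_{uw})p_{vw}$ if $(u,v)$ is positive, $(1-p_{uw})(1-p_{vw})$ if negative; $e.lp_w(u,v)=(1-p_{uw}p_{vw})x_{uv}$ if positive, $(1-p_{uw}p_{vw})(1-x_{uv})$ if negative. $ALG(uvw)=e.cost_w(u,v)+e.cost_v(w,u)+e.cost_u(v,w)$, $LP(uvw)=e.lp_w(u,v)+e.lp_v(w,u)+e.lp_u(v,w)$. A $(+,+,-)$-triangle has two positive edges and one negative edge. *)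

theory Defs
  imports Complex_Main
begin

text \<open>Edge signs: True = positive, False = negative.
  Triangle uvw with edges uv, vw, uw; lengths x_uv, x_vw, x_uw.\<close>

definition pval :: "(real \<Rightarrow> real) \<Rightarrow> (real \<Rightarrow> real) \<Rightarrow> bool \<Rightarrow> real \<Rightarrow> real" where
  "pval fp fm s x = (if s then fp x else fm x)"

text \<open>e.cost_w(u,v): sign of uv, p_uw, p_vw.\<close>
definition ecost :: "bool \<Rightarrow> real \<Rightarrow> real \<Rightarrow> real" where
  "ecost s a b = (if s then a * (1 - b) + (1 - a) * b else (1 - a) * (1 - b))"

text \<open>e.lp_w(u,v): sign of uv, p_uw, p_vw, x_uv.\<close>
definition elp :: "bool \<Rightarrow> real \<Rightarrow> real \<Rightarrow> real \<Rightarrow> real" where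
  "elp s a b x = (if s then (1 - a * b) * x else (1 - a * b) * (1 - x))"

definition ALG :: "(real \<Rightarrow> real) \<Rightarrow> (real \<Rightarrow> real) \<Rightarrow>
    bool \<Rightarrow> bool \<Rightarrow> bool \<Rightarrow> real \<Rightarrow> real \<Rightarrow> real \<Rightarrow> real" where
  "ALG fp fm suv svw suw xuv xvw xuw =
     (let puv = pval fp fm suv xuv; pvw = pval fp fm svw xvw; puw = pval fp fm suw xuw in
      ecost suv puw pvw + ecost suw pvw puv + ecost svw puv puw)"

definition LP :: "(real \<Rightarrow> real) \<Rightarrow> (real \<Rightarrow> real) \<Rightarrow>
    bool \<Rightarrow> bool \<Rightarrow> bool \<Rightarrow> real \<Rightarrow> real \<Rightarrow> real \<Rightarrow> real" where
  "LP fp fm suv svw suw xuv xvw xuw =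
     (let puv = pval fp fm suv xuv; pvw = pval fp fm svw xvw; puw = pval fp fm suw xuw in
      elp suv puw pvw xuv + elp suw pvw puv xuw + elp svw puv puw xvw)"

definition ppm_signs :: "bool \<Rightarrow> bool \<Rightarrow> bool \<Rightarrow> bool" where
  "ppm_signs a b c = ((a \<and> b \<and> \<not> c) \<or> (a \<and> \<not> b \<and> c) \<or> (\<not> a \<and> b \<and> c))"

definition valid_lengths :: "real \<Rightarrow> real \<Rightarrow> real \<Rightarrow> bool" where
  "valid_lengths a b c = (a \<in> {0..1} \<and> b \<in> {0..1} \<and> c \<in> {0..1} \<and>
     a \<le> b + c \<and> b \<le> a + c \<and> c \<le> a + b)"

end

theory Submission
  imports Defs
begin

text \<open>Test the approximation condition on the degenerate \<open>(+,+,-)\<close>-triangle with positive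
  edges of length \<open>x\<close> and negative edge of length \<open>2x\<close>. With \<open>p = f\<^sup>+(x)\<close> and \<open>f\<^sup>-(2x) = 2x\<close>
  the condition \<open>ALG \<le> \<alpha> LP\<close> becomes a quadratic inequality in \<open>p\<close> whose leading coefficient
  \<open>1 + \<alpha> - 2\<alpha>x\<close> is positive for \<open>x \<le> 1/2\<close>, so \<open>p\<close> is at least the smaller root.\<close>

lemma quadratic_nonpos_imp_ge_smaller_root:
  fixes a b c p :: real
  assumes "a > 0" and "a * p^2 + b * p + c \<le> 0"
  shows "p \<ge> (- b - sqrt (b^2 - 4*a*c)) / (2*a)"
proof -
  have "(2*a*p + b)^2 = 4*a*(a*p^2 + b*p + c) + (b^2 - 4*a*c)"
    by (simp add: power2_eq_square algebra_simps)
  moreover have "4*a*(a*p^2 + b*p + c) \<le> 0"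
    using assms by (simp add: mult_nonneg_nonpos)
  ultimately have "(2*a*p + b)^2 \<le> b^2 - 4*a*c" by linarith
  then have "\<bar>2*a*p + b\<bar> \<le> sqrt (b^2 - 4*a*c)"
    using real_sqrt_le_mono by fastforce
  then have "- b - sqrt (b^2 - 4*a*c) \<le> 2*a*p" by linarith
  then show ?thesis
    using assms(1) by (simp add: divide_le_eq mult.commute)
qed

lemma ALG_isosceles_ppm:
  assumes "fm c = c"
  shows "ALG fp fm True True False a a c = 2 * (c + fp a - 2 * c * fp a) + (1 - fp a)^2"
  unfolding ALG_def pval_def ecost_def Let_def assms
  by (simp add: power2_eq_square algebra_simps)

lemma LP_isosceles_ppm:
  assumes "fm c = c"
  shows "LP fp fm True True False a a c = 2 * (1 - c * fp a) * a + (1 - (fp a)^2) * (1 - c)"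
  unfolding LP_def pval_def elp_def Let_def assms
  by (simp add: power2_eq_square algebra_simps)

theorem lemma4:
  fixes alpha :: real and fp fm :: "real \<Rightarrow> real"
  assumes "alpha > 0"
    and "\<forall>x\<in>{0..1}. fm x = x"
    and "\<forall>x\<in>{0..1}. fp x \<in> {0..1}"
    and "\<forall>suv svw suw xuv xvw xuw. ppm_signs suv svw suw \<and> valid_lengths xuv xvw xuw \<longrightarrow>
           ALG fp fm suv svw suw xuv xvw xuw \<le> alpha * LP fp fm suv svw suw xuv xvw xuw"
  shows "\<forall>x\<in>{0..1/2}. fp x \<ge>
    (8*x - 4*alpha*x^2 - sqrt ((4*alpha*x^2 - 8*x)^2 - 4*(1 - alpha + 4*x)*(1 + alpha - 2*alpha*x)))
      / (2*(1 + alpha - 2*alpha*x))"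
proof
  fix x :: real
  assume x: "x \<in> {0..1/2}"
  define p where "p = fp x"
  have fm_2x: "fm (2*x) = 2*x" using assms(2) x by auto
  have "ppm_signs True True False" and "valid_lengths x x (2*x)"
    using x by (auto simp: ppm_signs_def valid_lengths_def)
  then have "ALG fp fm True True False x x (2*x) \<le> alpha * LP fp fm True True False x x (2*x)"
    using assms(4) by blast
  then have quadratic:
    "(1 + alpha - 2*alpha*x) * p^2 + (4*alpha*x^2 - 8*x) * p + (1 - alpha + 4*x) \<le> 0"
    unfolding ALG_isosceles_ppm[where fm = fm, OF fm_2x] LP_isosceles_ppm[where fm = fm, OF fm_2x]
      p_def[symmetric]
    by (simp add: power2_eq_square algebra_simps)
  have "alpha * (2*x) \<le> alpha" using x assms(1) by simp
  then have leading_pos: "1 + alpha - 2*alpha*x > 0" by linarith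
  from quadratic_nonpos_imp_ge_smaller_root[OF leading_pos quadratic]
  show "fp x \<ge> (8*x - 4*alpha*x^2 - sqrt ((4*alpha*x^2 - 8*x)^2
      - 4*(1 - alpha + 4*x)*(1 + alpha - 2*alpha*x))) / (2*(1 + alpha - 2*alpha*x))"
    by (simp add: p_def algebra_simps)
qed

end
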